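(* Let $q\ge2$, $r\ge1$, $\rho\ge2$, $s\ge1$ be integers, $N=r+\rho-1$ and $n=sN$. For $t=0,\dots,s-1$ let $\mathcal{R}_{t+1}=\{tN+1,\dots,(t+1)N\}$. Let $\mathcal{C}\subseteq Q^n$ ($|Q|=q$) be a code with minimum distance $d$ such that $\mathcal{C}|_{\mathcal{R}_i}$ has minimum distance at least $\rho$ for every $i=1,\dots,s$. Let $$T:=\{\mathbf{i}=(i_1,\dots,i_s)\mid i_1+\cdots+i_s\ge d,\ i_j\in\{0,\rho,\rho+1,\dots,N\}\text{ for all }j\}.$$ Then $$|\mathcal{C}|\le 1+\min\sum_{\mathbf{j}\in\{0,\dots,N\}^s\setminus\{\underline0\}}f_{\mathbf{j}}K^{(N)}_{\mathbf{j}}(\underline0),$$ where the minimum is over all real $(f_{\mathbf{j}})$ satisfying $f_{\mathbf{j}}\ge0$ for $\mathbf{j}\in\{0,\dots,N\}^s\setminus\{\underline0\}$ and $1+\sum_{\mathbf{j}\in\{0,\dots,N\}^s\setminus\{\underline0\}}f_{\mathbf{j}}K^{(N)}_{\mathbf{j}}(\mathbf{i})\le0$ for all $\mathbf{i}\in T$.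
   Context: The Krawtchouk polynomial is $K_j^{(N)}(x)=\sum_{l=0}^j(-1)^l(q-1)^{j-l}\binom xl\binom{N-x}{j-l}$, and for $\mathbf{j}=(j_1,\dots,j_s)$, $\mathbf{x}=(x_1,\dots,x_s)$, $K^{(N)}_{\mathbf{j}}(\mathbf{x})=\prod_{p=1}^sK^{(N)}_{j_p}(x_p)$; $\underline0=(0,\dots,0)$. Minimum distance refers to Hamming distance; $\mathcal{C}|_{\mathcal{R}_i}$ is the projection of $\mathcal{C}$ onto the coordinates in $\mathcal{R}_i$. *)

theory Defs
  imports Complex_Main
begin

text \<open>Words of length n over Q are lists; coordinates are 0-based, so the block
  R_{t+1} = {tN+1,...,(t+1)N} is the index range {t*N ..< (t+1)*N}.\<close>

definition hamming :: "'a list \<Rightarrow> 'a list \<Rightarrow> nat" where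
  "hamming x y = card {k. k < length x \<and> x ! k \<noteq> y ! k}"

definition min_dist :: "'a list set \<Rightarrow> nat" where
  "min_dist C = Min {hamming x y | x y. x \<in> C \<and> y \<in> C \<and> x \<noteq> y}"

definition min_dist_at_least :: "'a list set \<Rightarrow> nat \<Rightarrow> bool" where
  "min_dist_at_least C \<rho> \<longleftrightarrow> (\<forall>x\<in>C. \<forall>y\<in>C. x \<noteq> y \<longrightarrow> \<rho> \<le> hamming x y)"

definition proj_block :: "nat \<Rightarrow> nat \<Rightarrow> 'a list set \<Rightarrow> 'a list set" where
  "proj_block N t C = (\<lambda>x. take N (drop (t * N) x)) ` C"

definition krawtchouk :: "nat \<Rightarrow> nat \<Rightarrow> nat \<Rightarrow> nat \<Rightarrow> real" where
  "krawtchouk q N j x =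
     (\<Sum>l = 0..j. (-1) ^ l * (real q - 1) ^ (j - l) * real (x choose l) * real ((N - x) choose (j - l)))"

text \<open>Multi-indices in {0,...,N}^s, represented as functions nat => nat vanishing from s on.\<close>
definition multi_idx :: "nat \<Rightarrow> nat \<Rightarrow> (nat \<Rightarrow> nat) set" where
  "multi_idx s N = {j. (\<forall>t<s. j t \<le> N) \<and> (\<forall>t\<ge>s. j t = 0)}"

definition krawtchouk_multi :: "nat \<Rightarrow> nat \<Rightarrow> nat \<Rightarrow> (nat \<Rightarrow> nat) \<Rightarrow> (nat \<Rightarrow> nat) \<Rightarrow> real" where
  "krawtchouk_multi q N s j x = (\<Prod>p<s. krawtchouk q N (j p) (x p))"

definition T_set :: "nat \<Rightarrow> nat \<Rightarrow> nat \<Rightarrow> nat \<Rightarrow> (nat \<Rightarrow> nat) set" where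
  "T_set s N \<rho> d = {i \<in> multi_idx s N. (\<Sum>t<s. i t) \<ge> d \<and> (\<forall>t<s. i t = 0 \<or> \<rho> \<le> i t)}"

end

theory Submission
  imports Defs "HOL-Library.FuncSet"
begin

text \<open>Delsarte's linear programming argument, applied block by block. On words of length m
  the kernel (u, v) \<mapsto> K_j(d(u, v)) is a Gram kernel: with the letter characters
  \<chi>(a, Some e) = [a = e] - 1/q and \<chi>(a, None) = 1 one has
  K_j(d(u, v)) = \<Sum>_w q^j \<Prod>_i \<chi>(u_i, w_i) \<chi>(v_i, w_i), summed over the masks
  w \<in> ({None} \<union> Some ` Q)^m with exactly j entries different from None; the two Krawtchouk
  recursions are the two cases for the first entry of the mask. A product of Gram kernels is
  again a Gram kernel, so the sum over all pairs of codewords of K_j, evaluated at the vector of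
  block distances, is nonnegative. For distinct codewords this vector lies in T, so combining
  the constraints on f with these inequalities gives |C| (F + 1 - |C|) \<ge> 0, where F \<ge> 0 is
  the objective value.\<close>

lemma krawtchouk_0 [simp]: "krawtchouk q m 0 x = 1"
  by (simp add: krawtchouk_def)

lemma krawtchouk_length_0: "krawtchouk q 0 j 0 = of_bool (j = 0)"
  by (cases j) (auto simp: krawtchouk_def intro!: sum.neutral elim: less_SucE)

lemma krawtchouk_at_0: "krawtchouk q N j 0 = (real q - 1) ^ j * real (N choose j)"
  unfolding krawtchouk_def by (simp add: sum.atLeast_Suc_atMost sum.neutral)

lemma krawtchouk_at_0_nonneg: "q \<ge> 1 \<Longrightarrow> 0 \<le> krawtchouk q N j 0"
  by (simp add: krawtchouk_at_0)

lemma krawtchouk_Suc_Suc: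
  assumes "x \<le> m"
  shows "krawtchouk q (Suc m) (Suc j) x = krawtchouk q m (Suc j) x + (real q - 1) * krawtchouk q m j x"
proof -
  define n where "n = m - x"
  have n: "Suc m - x = Suc n" using assms by (simp add: n_def)
  have "krawtchouk q (Suc m) (Suc j) x =
     (\<Sum>l = 0..j. (-1) ^ l * (real q - 1) ^ (Suc j - l) * real (x choose l) * real (Suc n choose (Suc j - l)))
     + (-1) ^ Suc j * real (x choose Suc j)"
    unfolding krawtchouk_def n by simp
  also have "(\<Sum>l = 0..j. (-1) ^ l * (real q - 1) ^ (Suc j - l) * real (x choose l) * real (Suc n choose (Suc j - l)))
     = (\<Sum>l = 0..j. (-1) ^ l * (real q - 1) ^ (Suc j - l) * real (x choose l) * real (n choose (Suc j - l)))
      + (real q - 1) * (\<Sum>l = 0..j. (-1) ^ l * (real q - 1) ^ (j - l) * real (x choose l) * real (n choose (j - l)))"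
    unfolding sum_distrib_left sum.distrib[symmetric]
    by (rule sum.cong) (auto simp: Suc_diff_le algebra_simps)
  finally show ?thesis
    unfolding krawtchouk_def n_def by (simp add: algebra_simps)
qed

lemma krawtchouk_Suc_Suc_Suc:
  assumes "x \<le> m"
  shows "krawtchouk q (Suc m) (Suc j) (Suc x) = krawtchouk q m (Suc j) x - krawtchouk q m j x"
proof -
  define n where "n = m - x"
  have n: "Suc m - Suc x = n" using assms by (simp add: n_def)
  have shift: "krawtchouk q k (Suc j) y = (real q - 1) ^ Suc j * real ((k - y) choose Suc j) +
      (\<Sum>l = 0..j. (-1) ^ Suc l * (real q - 1) ^ (j - l) * real (y choose Suc l) * real ((k - y) choose (j - l)))"
    for k y
    unfolding krawtchouk_def
    by (subst sum.atLeast0_atMost_Suc_shift) (simp add: o_def del: sum.atLeast0_atMost_Suc)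
  have "(\<Sum>l = 0..j. (-1) ^ Suc l * (real q - 1) ^ (j - l) * real (Suc x choose Suc l) * real (n choose (j - l)))
    = (\<Sum>l = 0..j. (-1) ^ Suc l * (real q - 1) ^ (j - l) * real (x choose Suc l) * real (n choose (j - l)))
      - (\<Sum>l = 0..j. (-1) ^ l * (real q - 1) ^ (j - l) * real (x choose l) * real (n choose (j - l)))"
    unfolding sum_subtractf[symmetric] by (rule sum.cong) (auto simp: algebra_simps)
  then show ?thesis
    using shift[of "Suc m" "Suc x"] shift[of m x] unfolding n n_def[symmetric]
    by (simp add: krawtchouk_def n_def)
qed

lemma hamming_Cons [simp]: "hamming (a # u) (b # v) = hamming u v + of_bool (a \<noteq> b)"
proof -
  have "{k. k < length (a # u) \<and> (a # u) ! k \<noteq> (b # v) ! k} =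
     (if a = b then {} else {0}) \<union> Suc ` {k. k < length u \<and> u ! k \<noteq> v ! k}"
    by (auto simp: image_iff less_Suc_eq_0_disj)
  then show ?thesis
    by (simp add: hamming_def card_image)
qed

lemma hamming_le_length: "hamming u v \<le> length u"
  unfolding hamming_def by (rule order.trans[OF card_mono[of "{..<length u}"]]) auto

lemma hamming_self [simp]: "hamming u u = 0"
  by (simp add: hamming_def)

lemma hamming_append:
  "length u = length u' \<Longrightarrow> hamming (u @ w) (u' @ w') = hamming u u' + hamming w w'"
proof (induction u arbitrary: u')
  case (Cons a u)
  then show ?case by (cases u') auto
qed simp

lemma gram_form_nonneg:
  fixes a :: "'z \<Rightarrow> real" and \<phi> :: "'z \<Rightarrow> 'x \<Rightarrow> real"
  assumes "\<And>z. z \<in> Z \<Longrightarrow> 0 \<le> a z"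
  shows "0 \<le> (\<Sum>x\<in>A. \<Sum>y\<in>A. c x * c y * (\<Sum>z\<in>Z. a z * \<phi> z x * \<phi> z y))"
proof -
  have "(\<Sum>x\<in>A. \<Sum>y\<in>A. c x * c y * (\<Sum>z\<in>Z. a z * \<phi> z x * \<phi> z y))
      = (\<Sum>z\<in>Z. a z * (\<Sum>x\<in>A. c x * \<phi> z x)\<^sup>2)"
    by (simp add: power2_eq_square sum_distrib_left sum_distrib_right sum.swap[of _ Z] mult_ac)
  also have "\<dots> \<ge> 0"
    by (intro sum_nonneg mult_nonneg_nonneg assms zero_le_power2)
  finally show ?thesis .
qed

lemma prod_gram_form_nonneg:
  fixes a :: "'i \<Rightarrow> 'z \<Rightarrow> real" and \<phi> :: "'i \<Rightarrow> 'z \<Rightarrow> 'x \<Rightarrow> real"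
  assumes "finite I" "\<And>t. t \<in> I \<Longrightarrow> finite (Z t)" "\<And>t z. t \<in> I \<Longrightarrow> z \<in> Z t \<Longrightarrow> 0 \<le> a t z"
  shows "0 \<le> (\<Sum>x\<in>A. \<Sum>y\<in>A. c x * c y * (\<Prod>t\<in>I. \<Sum>z\<in>Z t. a t z * \<phi> t z x * \<phi> t z y))"
proof -
  have "(\<Prod>t\<in>I. \<Sum>z\<in>Z t. a t z * \<phi> t z x * \<phi> t z y) = (\<Sum>W\<in>Pi\<^sub>E I Z.
      (\<Prod>t\<in>I. a t (W t)) * (\<Prod>t\<in>I. \<phi> t (W t) x) * (\<Prod>t\<in>I. \<phi> t (W t) y))" for x y
    by (simp add: prod_sum_PiE assms prod.distrib)
  moreover have "0 \<le> (\<Prod>t\<in>I. a t (W t))" if "W \<in> Pi\<^sub>E I Z" for W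
    using that by (intro prod_nonneg assms) auto
  ultimately show ?thesis
    using gram_form_nonneg[where Z = "Pi\<^sub>E I Z" and a = "\<lambda>W. \<Prod>t\<in>I. a t (W t)"
        and \<phi> = "\<lambda>W x. \<Prod>t\<in>I. \<phi> t (W t) x" and A = A and c = c]
    by simp
qed

fun letter_char :: "nat \<Rightarrow> 'a \<Rightarrow> 'a option \<Rightarrow> real" where
  "letter_char q a None = 1"
| "letter_char q a (Some e) = of_bool (a = e) - 1 / real q"

lemma letter_char_gram:
  assumes "finite Q" "card Q = q" "q > 0" "a \<in> Q" "b \<in> Q"
  shows "real q * (\<Sum>e\<in>Q. letter_char q a (Some e) * letter_char q b (Some e))
    = (if a = b then real q - 1 else -1)"
proof -
  have "(\<Sum>e\<in>Q. letter_char q a (Some e) * letter_char q b (Some e)) =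
     (\<Sum>e\<in>Q. of_bool (a = e \<and> b = e)) - (\<Sum>e\<in>Q. of_bool (a = e)) / real q
      - (\<Sum>e\<in>Q. of_bool (b = e)) / real q + (\<Sum>e\<in>Q. 1 / (real q * real q))"
    by (simp add: algebra_simps sum.distrib sum_subtractf sum_divide_distrib) (rule sum.cong, auto)
  also have "\<dots> = of_bool (a = b) - 2 / real q + real q / (real q * real q)"
    using assms by (cases "a = b") (auto simp: sum.delta intro!: sum.neutral)
  finally show ?thesis
    using assms by (cases "a = b") (simp_all add: field_simps)
qed

definition masks :: "'a set \<Rightarrow> nat \<Rightarrow> 'a option list set" where
  "masks Q m = {w. set w \<subseteq> insert None (Some ` Q) \<and> length w = m}"

definition mask_weight :: "nat \<Rightarrow> nat \<Rightarrow> 'a option list \<Rightarrow> real" where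
  "mask_weight q j w = (if length (filter (\<lambda>e. e \<noteq> None) w) = j then real q ^ j else 0)"

definition word_char :: "nat \<Rightarrow> 'a list \<Rightarrow> 'a option list \<Rightarrow> real" where
  "word_char q u w = (\<Prod>(a, e) \<leftarrow> zip u w. letter_char q a e)"

lemma finite_masks: "finite Q \<Longrightarrow> finite (masks Q m)"
  by (simp add: masks_def finite_lists_length_eq)

lemma masks_0 [simp]: "masks Q 0 = {[]}"
  by (auto simp: masks_def)

lemma mask_weight_nonneg: "0 \<le> mask_weight q j w"
  by (simp add: mask_weight_def)

lemma mask_weight_Cons_None [simp]: "mask_weight q j (None # w) = mask_weight q j w"
  by (simp add: mask_weight_def)

lemma mask_weight_Cons_Some [simp]:
  "mask_weight q j (Some e # w) = (case j of 0 \<Rightarrow> 0 | Suc j' \<Rightarrow> real q * mask_weight q j' w)"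
  by (simp add: mask_weight_def split: nat.split)

lemma word_char_Cons [simp]: "word_char q (a # u) (e # w) = letter_char q a e * word_char q u w"
  by (simp add: word_char_def)

lemma sum_masks_Suc:
  assumes "finite Q"
  shows "(\<Sum>w\<in>masks Q (Suc m). f w) = (\<Sum>w\<in>masks Q m. f (None # w) + (\<Sum>e\<in>Q. f (Some e # w)))"
proof -
  have "(\<Sum>w\<in>masks Q (Suc m). f w) = (\<Sum>(w, e)\<in>masks Q m \<times> insert None (Some ` Q). f (e # w))"
    unfolding masks_def lists_length_Suc_eq
    by (subst sum.reindex) (auto simp: inj_on_def case_prod_beta)
  also have "\<dots> = (\<Sum>w\<in>masks Q m. \<Sum>e\<in>insert None (Some ` Q). f (e # w))"
    by (rule sum.cartesian_product[symmetric])
  also have "\<dots> = (\<Sum>w\<in>masks Q m. f (None # w) + (\<Sum>e\<in>Q. f (Some e # w)))"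
    using assms by (simp add: sum.reindex)
  finally show ?thesis .
qed

lemma krawtchouk_hamming_gram:
  assumes Q: "finite Q" "card Q = q" "q > 0"
  shows "length u = m \<Longrightarrow> length v = m \<Longrightarrow> set u \<subseteq> Q \<Longrightarrow> set v \<subseteq> Q \<Longrightarrow>
    krawtchouk q m j (hamming u v) =
      (\<Sum>w\<in>masks Q m. mask_weight q j w * word_char q u w * word_char q v w)"
proof (induction m arbitrary: u v j)
  case 0
  then show ?case
    by (simp add: mask_weight_def word_char_def krawtchouk_length_0)
next
  case (Suc m)
  then obtain a u' b v' where uv: "u = a # u'" "v = b # v'"
    by (metis length_Suc_conv)
  let ?S = "\<lambda>j. \<Sum>w\<in>masks Q m. mask_weight q j w * word_char q u' w * word_char q v' w"
  have IH: "krawtchouk q m j (hamming u' v') = ?S j" for j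
    using Suc uv by (intro Suc.IH) auto
  have ab: "a \<in> Q" "b \<in> Q" using Suc.prems uv by auto
  have "(\<Sum>w\<in>masks Q (Suc m). mask_weight q j w * word_char q u w * word_char q v w)
     = ?S j + (case j of 0 \<Rightarrow> 0 | Suc j' \<Rightarrow>
         real q * (\<Sum>e\<in>Q. letter_char q a (Some e) * letter_char q b (Some e)) * ?S j')"
    unfolding sum_masks_Suc[OF Q(1)] uv
    by (cases j) (simp_all add: sum.distrib sum_distrib_left sum_distrib_right sum.swap[of _ Q] mult_ac)
  also have "\<dots> = krawtchouk q (Suc m) j (hamming u v)"
    using hamming_le_length[of u' v'] Suc.prems uv
    by (cases j) (simp_all add: letter_char_gram[OF Q ab] IH[symmetric] krawtchouk_Suc_Suc krawtchouk_Suc_Suc_Suc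
        del: letter_char.simps)
  finally show ?case ..
qed

definition block :: "nat \<Rightarrow> nat \<Rightarrow> 'a list \<Rightarrow> 'a list" where
  "block N t x = take N (drop (t * N) x)"

definition block_dists :: "nat \<Rightarrow> nat \<Rightarrow> 'a list \<Rightarrow> 'a list \<Rightarrow> nat \<Rightarrow> nat" where
  "block_dists N s x y t = (if t < s then hamming (block N t x) (block N t y) else 0)"

lemma block_dists_self [simp]: "block_dists N s x x = (\<lambda>_. 0)"
  by (simp add: block_dists_def fun_eq_iff)

lemma block_0: "block N 0 x = take N x"
  by (simp add: block_def)

lemma block_Suc: "block N (Suc t) x = block N t (drop N x)"
  by (simp add: block_def add.commute)

lemma length_block:
  assumes "length x = s * N" "t < s"
  shows "length (block N t x) = N"
proof -
  have "Suc t * N \<le> s * N"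
    using assms(2) by (intro mult_le_mono1) simp
  then show ?thesis
    using assms(1) by (simp add: block_def)
qed

lemma set_block_subset: "set (block N t x) \<subseteq> set x"
  by (auto simp: block_def dest: in_set_takeD in_set_dropD)

lemma hamming_eq_sum_blocks:
  "length x = s * N \<Longrightarrow> length y = s * N \<Longrightarrow>
    hamming x y = (\<Sum>t<s. hamming (block N t x) (block N t y))"
proof (induction s arbitrary: x y)
  case (Suc s)
  have "hamming x y = hamming (take N x @ drop N x) (take N y @ drop N y)"
    by simp
  also have "\<dots> = hamming (take N x) (take N y) + hamming (drop N x) (drop N y)"
    using Suc.prems by (intro hamming_append) simp
  also have "\<dots> = (\<Sum>t<Suc s. hamming (block N t x) (block N t y))"
    using Suc.IH[of "drop N x" "drop N y"] Suc.prems
    by (simp add: sum.lessThan_Suc_shift block_0 block_Suc del: sum.lessThan_Suc)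
  finally show ?case .
qed simp

lemma krawtchouk_multi_block_dists_nonneg:
  assumes Q: "finite Q" "card Q = q" "q > 0"
    and C: "C \<subseteq> {x. length x = s * N \<and> set x \<subseteq> Q}"
  shows "0 \<le> (\<Sum>x\<in>C. \<Sum>y\<in>C. krawtchouk_multi q N s j (block_dists N s x y))"
proof -
  have gram: "krawtchouk_multi q N s j (block_dists N s x y) = (\<Prod>t<s. \<Sum>w\<in>masks Q N.
      mask_weight q (j t) w * word_char q (block N t x) w * word_char q (block N t y) w)"
    if "x \<in> C" "y \<in> C" for x y
    unfolding krawtchouk_multi_def block_dists_def
  proof (intro prod.cong refl)
    fix t assume "t \<in> {..<s}"
    then have "length (block N t x) = N" "length (block N t y) = N"
      "set (block N t x) \<subseteq> Q" "set (block N t y) \<subseteq> Q"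
      using that C length_block set_block_subset by fastforce+
    then show "krawtchouk q N (j t) (if t < s then hamming (block N t x) (block N t y) else 0) =
        (\<Sum>w\<in>masks Q N. mask_weight q (j t) w * word_char q (block N t x) w * word_char q (block N t y) w)"
      using \<open>t \<in> {..<s}\<close> by (simp add: krawtchouk_hamming_gram[OF Q])
  qed
  have "0 \<le> (\<Sum>x\<in>C. \<Sum>y\<in>C. 1 * 1 * (\<Prod>t<s. \<Sum>w\<in>masks Q N.
      mask_weight q (j t) w * word_char q (block N t x) w * word_char q (block N t y) w))"
    using prod_gram_form_nonneg[where I = "{..<s}" and Z = "\<lambda>_. masks Q N" and a = "\<lambda>t. mask_weight q (j t)"
        and \<phi> = "\<lambda>t w x. word_char q (block N t x) w" and A = C and c = "\<lambda>_. 1"]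
    by (simp add: finite_masks Q mask_weight_nonneg)
  also have "\<dots> = (\<Sum>x\<in>C. \<Sum>y\<in>C. krawtchouk_multi q N s j (block_dists N s x y))"
    using gram by (intro sum.cong refl) simp
  finally show ?thesis .
qed

lemma card_le_by_kernel_bound:
  fixes G :: "'x \<Rightarrow> 'x \<Rightarrow> real"
  assumes "finite C" "0 \<le> F"
    and diag: "\<And>x. x \<in> C \<Longrightarrow> G x x = F"
    and off_diag: "\<And>x y. x \<in> C \<Longrightarrow> y \<in> C \<Longrightarrow> x \<noteq> y \<Longrightarrow> G x y \<le> -1"
    and nonneg: "0 \<le> (\<Sum>x\<in>C. \<Sum>y\<in>C. G x y)"
  shows "real (card C) \<le> 1 + F"
proof -
  have "(\<Sum>x\<in>C. \<Sum>y\<in>C. G x y) = (\<Sum>x\<in>C. G x x + (\<Sum>y\<in>C - {x}. G x y))"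
    using \<open>finite C\<close> by (intro sum.cong refl) (simp add: sum.remove)
  also have "\<dots> \<le> (\<Sum>x\<in>C. F + (\<Sum>y\<in>C - {x}. -1))"
    using diag off_diag by (intro sum_mono add_mono) auto
  also have "\<dots> = (\<Sum>x\<in>C. F + 1 - real (card C))"
  proof (intro sum.cong refl)
    fix x assume "x \<in> C"
    then have "1 \<le> card C"
      using \<open>finite C\<close> by (auto simp: Suc_le_eq card_gt_0_iff)
    then show "F + (\<Sum>y\<in>C - {x}. -1) = F + 1 - real (card C)"
      using \<open>x \<in> C\<close> \<open>finite C\<close> by (simp add: of_nat_diff)
  qed
  also have "\<dots> = real (card C) * (F + 1 - real (card C))"
    by simp
  finally have "0 \<le> real (card C) * (F + 1 - real (card C))"
    using nonneg by linarith
  then show ?thesis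
    using \<open>0 \<le> F\<close> by (cases "card C = 0") (auto simp: zero_le_mult_iff)
qed

lemma block_dists_in_T_set:
  assumes C: "C \<subseteq> {x. length x = s * N}" "finite C"
    and d: "min_dist C = d"
    and blocks: "\<forall>t<s. min_dist_at_least (proj_block N t C) \<rho>"
    and xy: "x \<in> C" "y \<in> C" "x \<noteq> y"
  shows "block_dists N s x y \<in> T_set s N \<rho> d"
proof -
  have "block_dists N s x y t \<le> N" if "t < s" for t
    using hamming_le_length[of "block N t x"] length_block[of x s N t] xy(1) C(1) that
    by (auto simp: block_dists_def)
  then have "block_dists N s x y \<in> multi_idx s N"
    by (simp add: multi_idx_def block_dists_def)
  moreover have "d \<le> (\<Sum>t<s. block_dists N s x y t)"
  proof -
    have "finite {hamming x y | x y. x \<in> C \<and> y \<in> C \<and> x \<noteq> y}"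
      by (rule finite_subset[of _ "(\<lambda>(x, y). hamming x y) ` (C \<times> C)"]) (use C in auto)
    then have "d \<le> hamming x y"
      unfolding d[symmetric] min_dist_def using xy by (intro Min_le) auto
    also have "\<dots> = (\<Sum>t<s. block_dists N s x y t)"
      using xy C(1) hamming_eq_sum_blocks[of x s N y] by (auto simp: block_dists_def)
    finally show ?thesis .
  qed
  moreover have "block_dists N s x y t = 0 \<or> \<rho> \<le> block_dists N s x y t" if "t < s" for t
  proof (cases "block N t x = block N t y")
    case False
    have "block N t x \<in> proj_block N t C" "block N t y \<in> proj_block N t C"
      using xy unfolding proj_block_def block_def by auto
    with False blocks \<open>t < s\<close> show ?thesis
      unfolding min_dist_at_least_def block_dists_def by auto
  qed (simp add: block_dists_def)
  ultimately show ?thesis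
    unfolding T_set_def by auto
qed

theorem theorem4:
  fixes Q :: "'a set" and C :: "'a list set"
    and q r \<rho> s N n d :: nat
  assumes "q \<ge> 2" "r \<ge> 1" "\<rho> \<ge> 2" "s \<ge> 1"
    and "N = r + \<rho> - 1" "n = s * N"
    and "finite Q" "card Q = q"
    and "C \<subseteq> {x. length x = n \<and> set x \<subseteq> Q}"
    and "min_dist C = d"
    and "\<forall>t<s. min_dist_at_least (proj_block N t C) \<rho>"
  shows "\<forall>f :: (nat \<Rightarrow> nat) \<Rightarrow> real.
           (\<forall>j \<in> multi_idx s N - {\<lambda>_. 0}. f j \<ge> 0) \<longrightarrow>
           (\<forall>i \<in> T_set s N \<rho> d.
              1 + (\<Sum>j \<in> multi_idx s N - {\<lambda>_. 0}. f j * krawtchouk_multi q N s j i) \<le> 0) \<longrightarrow>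
           real (card C) \<le> 1 + (\<Sum>j \<in> multi_idx s N - {\<lambda>_. 0}. f j * krawtchouk_multi q N s j (\<lambda>_. 0))"
proof (intro allI impI)
  fix f :: "(nat \<Rightarrow> nat) \<Rightarrow> real"
  let ?J = "multi_idx s N - {\<lambda>_. 0}"
  let ?G = "\<lambda>x y. \<Sum>j\<in>?J. f j * krawtchouk_multi q N s j (block_dists N s x y)"
  assume f_nonneg: "\<forall>j\<in>?J. f j \<ge> 0"
    and f_T: "\<forall>i\<in>T_set s N \<rho> d. 1 + (\<Sum>j\<in>?J. f j * krawtchouk_multi q N s j i) \<le> 0"
  have Q: "finite Q" "card Q = q" "q > 0" and C: "C \<subseteq> {x. length x = s * N \<and> set x \<subseteq> Q}"
    using assms by auto
  have "finite C"
    using C by (rule finite_subset) (simp add: conj_commute finite_lists_length_eq Q)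
  show "real (card C) \<le> 1 + (\<Sum>j\<in>?J. f j * krawtchouk_multi q N s j (\<lambda>_. 0))"
  proof (rule card_le_by_kernel_bound[OF \<open>finite C\<close>])
    show "0 \<le> (\<Sum>j\<in>?J. f j * krawtchouk_multi q N s j (\<lambda>_. 0))"
      using f_nonneg Q unfolding krawtchouk_multi_def
      by (intro sum_nonneg mult_nonneg_nonneg prod_nonneg krawtchouk_at_0_nonneg) auto
    show "?G x x = (\<Sum>j\<in>?J. f j * krawtchouk_multi q N s j (\<lambda>_. 0))" for x
      by simp
    show "?G x y \<le> -1" if "x \<in> C" "y \<in> C" "x \<noteq> y" for x y
    proof -
      have "block_dists N s x y \<in> T_set s N \<rho> d"
        using C assms(10,11) \<open>finite C\<close> that by (intro block_dists_in_T_set) auto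
      then show ?thesis
        using f_T by fastforce
    qed
    have "0 \<le> (\<Sum>j\<in>?J. f j * (\<Sum>x\<in>C. \<Sum>y\<in>C. krawtchouk_multi q N s j (block_dists N s x y)))"
      using f_nonneg by (intro sum_nonneg mult_nonneg_nonneg krawtchouk_multi_block_dists_nonneg[OF Q C]) auto
    also have "\<dots> = (\<Sum>x\<in>C. \<Sum>y\<in>C. ?G x y)"
      by (simp add: sum_distrib_left sum.swap[of _ ?J])
    finally show "0 \<le> (\<Sum>x\<in>C. \<Sum>y\<in>C. ?G x y)" .
  qed
qed

end
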